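(* Let $h<k\leq d$ be integers with $h\geq 0$, and assume $\dim(S^kV\otimes S^{d-k}V)\leq\dim(S^hV\otimes S^{d-h}V)$. Then the linear map $\eta^{k-h}:S^kV\otimes S^{d-k}V\to S^hV\otimes S^{d-h}V$, $\eta^{k-h}=\sum_{|I|=k-h}\binom{k-h}{I}\partial^I\otimes x^I$, is injective.
   Context: $V\cong\mathbb{C}^{n+1}$ and $S^iV$ is identified with the space of homogeneous polynomials of degree $i$ in $x_0,\dots,x_n$. For a multi-index $I=(i_0,\dots,i_n)$, $|I|=\sum i_j$, $\binom{m}{I}=m!/(i_0!\cdots i_n!)$, $x^I=\prod x_j^{i_j}$, $\partial^I=\prod\partial_{x_j}^{i_j}$. The operator $\partial^I\otimes x^I$ acts on $p\otimes q\in S^kV\otimes S^{d-k}V$ by $p\otimes q\mapsto \partial^I p\otimes x^I q$. *)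

theory Defs
  imports Complex_Main
begin

text \<open>V = C^(n+1) with coordinates x_0..x_n. S^k V has the monomial basis x^I, |I| = k, so an element of
  S^k V (x) S^(d-k) V is given by its coefficients c(A,B) on the basis x^A (x) x^B,
  with |A| = k and |B| = d - k.\<close>

definition multi_idx :: "nat \<Rightarrow> nat \<Rightarrow> (nat \<Rightarrow> nat) set" where
  "multi_idx n k = {I. (\<forall>j>n. I j = 0) \<and> (\<Sum>j\<le>n. I j) = k}"

definition dimS :: "nat \<Rightarrow> nat \<Rightarrow> nat" where
  "dimS n k = card (multi_idx n k)"

definition tensor_space :: "nat \<Rightarrow> nat \<Rightarrow> nat \<Rightarrow> ((nat \<Rightarrow> nat) \<times> (nat \<Rightarrow> nat) \<Rightarrow> complex) set" where
  "tensor_space n k d = {c. \<forall>A B. c (A, B) \<noteq> 0 \<longrightarrow> A \<in> multi_idx n k \<and> B \<in> multi_idx n (d - k)}"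

definition multinom :: "nat \<Rightarrow> nat \<Rightarrow> (nat \<Rightarrow> nat) \<Rightarrow> complex" where
  "multinom n m I = of_nat (fact m) / (\<Prod>j\<le>n. of_nat (fact (I j)))"

text \<open>Using
  d^I x^(A'+I) = (prod_j (A'_j+I_j)!/A'_j!) x^A'  and  x^I x^(B'-I) = x^B'  (when I <= B'),
  the coefficient of x^A' (x) x^B' in eta^m(c) is given below.\<close>
definition eta :: "nat \<Rightarrow> nat \<Rightarrow> ((nat \<Rightarrow> nat) \<times> (nat \<Rightarrow> nat) \<Rightarrow> complex)
    \<Rightarrow> ((nat \<Rightarrow> nat) \<times> (nat \<Rightarrow> nat) \<Rightarrow> complex)" where
  "eta n m c = (\<lambda>(A, B). \<Sum>I\<in>multi_idx n m.
      if (\<forall>j. I j \<le> B j)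
      then multinom n m I * (\<Prod>j\<le>n. of_nat (fact (A j + I j)) / of_nat (fact (A j)))
           * c (\<lambda>j. A j + I j, \<lambda>j. B j - I j)
      else 0)"

end

theory Submission
  imports Defs
begin

text \<open>The operator \<open>\<eta> = \<Sum>\<^sub>j \<partial>\<^sub>j \<otimes> x\<^sub>j\<close> satisfies \<open>\<eta>\<^sup>m = \<Sum>\<^bsub>|I|=m\<^esub> (m choose I) \<partial>\<^bsup>I\<^esup> \<otimes> x\<^bsup>I\<^esup>\<close>,
  so it suffices to show that \<open>\<eta>\<^bsup>k-h\<^esup>\<close> is injective on \<open>S\<^sup>kV \<otimes> S\<^bsup>d-k\<^esup>V\<close>. Together with
  \<open>\<zeta> = \<Sum>\<^sub>j x\<^sub>j \<otimes> \<partial>\<^sub>j\<close> it forms an \<open>sl\<^sub>2\<close>-pair: \<open>[\<zeta>, \<eta>] = a - b\<close> on \<open>S\<^sup>aV \<otimes> S\<^sup>bV\<close>, and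
  \<open>\<zeta>\<close> is the adjoint of \<open>\<eta>\<close> for the Bombieri inner product. Iterating the commutator,
  \<open>\<zeta> \<eta>\<^bsup>m+1\<^esup> = \<eta>\<^bsup>m+1\<^esup> \<zeta> + (m+1)(a-b-m) \<eta>\<^sup>m\<close>; so if \<open>\<eta>\<^bsup>m+1\<^esup> c = 0\<close> with \<open>m+1 \<le> a-b\<close>,
  induction gives \<open>\<eta>\<zeta> c = -s c\<close> with \<open>s > 0\<close>, whence \<open>\<parallel>\<zeta> c\<parallel>\<^sup>2 = -s \<parallel>c\<parallel>\<^sup>2\<close> and \<open>c = 0\<close>.
  Thus \<open>\<eta>\<^sup>m\<close> is injective on \<open>S\<^sup>aV \<otimes> S\<^sup>bV\<close> whenever \<open>m \<le> a - b\<close>.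

  For \<open>n \<ge> 1\<close> the sequence \<open>j \<mapsto> dim S\<^sup>jV \<cdot> dim S\<^bsup>d-j\<^esup>V\<close> is strictly increasing for
  \<open>2j \<le> d\<close> and symmetric, so the dimension hypothesis forces \<open>d \<le> k + h\<close>, i.e.
  \<open>k - h \<le> k - (d - k)\<close>. For \<open>n = 0\<close> the operator \<open>\<eta>\<close> maps \<open>x\<^sup>a \<otimes> x\<^sup>b\<close> to \<open>a x\<^bsup>a-1\<^esup> \<otimes> x\<^bsup>b+1\<^esup>\<close>
  and is injective as long as \<open>a > 0\<close>.\<close>

lemma finite_multi_idx: "finite (multi_idx n k)"
proof -
  have "I j \<le> k" if "I \<in> multi_idx n k" "j \<le> n" for I j
  proof -
    have "I j \<le> (\<Sum>i\<le>n. I i)" using that(2) by (intro member_le_sum) auto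
    with that(1) show ?thesis by (simp add: multi_idx_def)
  qed
  then have "multi_idx n k \<subseteq> {I. \<forall>j. (j \<in> {..n} \<longrightarrow> I j \<in> {..k}) \<and> (j \<notin> {..n} \<longrightarrow> I j = 0)}"
    by (auto simp: multi_idx_def)
  then show ?thesis by (rule finite_subset) (intro finite_set_of_finite_funs, auto)
qed

lemma card_multi_idx: "card (multi_idx n k) = (n + k) choose k"
proof (induction n arbitrary: k)
  case 0
  have "multi_idx 0 k = {(\<lambda>j. if j = 0 then k else 0)}"
    by (auto simp: multi_idx_def fun_eq_iff)
  then show ?case by simp
next
  case (Suc n)
  have "bij_betw (\<lambda>I. (I (Suc n), I(Suc n := 0))) (multi_idx (Suc n) k)
      (SIGMA i:{..k}. multi_idx n (k - i))"
  proof (rule bij_betw_byWitness[where f' = "\<lambda>(i, J). J(Suc n := i)"])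
    show "(\<lambda>I. (I (Suc n), I(Suc n := 0))) ` multi_idx (Suc n) k \<subseteq> (SIGMA i:{..k}. multi_idx n (k - i))"
    proof (rule image_subsetI)
      fix I assume I: "I \<in> multi_idx (Suc n) k"
      have "(\<Sum>j\<le>n. (I(Suc n := 0)) j) = (\<Sum>j\<le>n. I j)" by (intro sum.cong) auto
      with I show "(I (Suc n), I(Suc n := 0)) \<in> (SIGMA i:{..k}. multi_idx n (k - i))"
        by (auto simp: multi_idx_def)
    qed
    show "(\<lambda>(i, J). J(Suc n := i)) ` (SIGMA i:{..k}. multi_idx n (k - i)) \<subseteq> multi_idx (Suc n) k"
    proof (rule image_subsetI)
      fix q assume "q \<in> (SIGMA i:{..k}. multi_idx n (k - i))"
      then obtain i J where q: "q = (i, J)" "i \<le> k" "J \<in> multi_idx n (k - i)" by blast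
      moreover have "(\<Sum>j\<le>n. (J(Suc n := i)) j) = (\<Sum>j\<le>n. J j)" by (intro sum.cong) auto
      ultimately show "(\<lambda>(i, J). J(Suc n := i)) q \<in> multi_idx (Suc n) k"
        by (auto simp: multi_idx_def)
    qed
    show "\<forall>I\<in>multi_idx (Suc n) k. (\<lambda>(i, J). J(Suc n := i)) (I (Suc n), I(Suc n := 0)) = I"
      by auto
    show "\<forall>q\<in>(SIGMA i:{..k}. multi_idx n (k - i)).
        (\<lambda>I. (I (Suc n), I(Suc n := 0))) ((\<lambda>(i, J). J(Suc n := i)) q) = q"
      by (auto simp: multi_idx_def fun_eq_iff)
  qed
  then have "card (multi_idx (Suc n) k) = card (SIGMA i:{..k}. multi_idx n (k - i))"
    by (rule bij_betw_same_card)
  also have "\<dots> = (\<Sum>i\<le>k. (n + (k - i)) choose (k - i))"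
    by (simp add: card_SigmaI finite_multi_idx Suc.IH)
  also have "\<dots> = (\<Sum>i\<le>k. (n + i) choose i)"
    by (rule sum.reindex_bij_witness[where i="\<lambda>i. k - i" and j="\<lambda>i. k - i"]) auto
  also have "\<dots> = Suc (n + k) choose k" by (rule sum_choose_lower)
  finally show ?case by simp
qed

lemma dimS_eq_choose: "dimS n k = (n + k) choose k"
  by (simp add: dimS_def card_multi_idx)

lemma sum_fun_upd_comp:
  fixes f :: "'b \<Rightarrow> 'c::comm_monoid_add"
  assumes "finite S" "j \<in> S"
  shows "(\<Sum>i\<in>S. f ((A(j := x)) i)) + f (A j) = (\<Sum>i\<in>S. f (A i)) + f x"
  using assms by (simp add: sum.remove ac_simps)

lemma prod_fun_upd_comp:
  fixes f :: "'b \<Rightarrow> 'c::comm_monoid_mult"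
  assumes "finite S" "j \<in> S"
  shows "(\<Prod>i\<in>S. f ((A(j := x)) i)) * f (A j) = (\<Prod>i\<in>S. f (A i)) * f x"
  using assms by (simp add: prod.remove ac_simps)

lemma sum_nested_if_eq_sum_filter:
  assumes "finite X" "finite Y"
  shows "(\<Sum>x\<in>X. \<Sum>y\<in>Y. if P x y then f x y else 0)
       = (\<Sum>q\<in>{q \<in> X \<times> Y. P (fst q) (snd q)}. f (fst q) (snd q))"
  using assms by (simp add: sum.cartesian_product sum.inter_filter split_beta)

section \<open>Unimodality of the dimensions\<close>

lemma choose_product_less_Suc:
  fixes n j d :: nat
  assumes "n \<ge> 1" "2 * j + 2 \<le> d"
  shows "((n + j) choose j) * ((n + (d - j)) choose (d - j))
       < ((n + Suc j) choose Suc j) * ((n + (d - Suc j)) choose (d - Suc j))"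
proof -
  define p where "p = d - Suc j"
  have d_j: "d - j = Suc p" and "j < p" using assms by (auto simp: p_def)
  define Cj Cj' Cp Cp' where "Cj = (n + j) choose j" and "Cj' = (n + Suc j) choose Suc j"
    and "Cp = (n + p) choose p" and "Cp' = (n + Suc p) choose Suc p"
  have rec_j: "Cj' * Suc j = Cj * (n + Suc j)" and rec_p: "Cp' * Suc p = Cp * (n + Suc p)"
    using Suc_times_binomial_eq[of "n + j" j] Suc_times_binomial_eq[of "n + p" p]
    by (simp_all add: Cj_def Cj'_def Cp_def Cp'_def ac_simps)
  have "Suc j * (n + Suc p) < Suc p * (n + Suc j)"
    using \<open>j < p\<close> assms(1) by (simp add: algebra_simps)
  moreover have "Cj * Cp > 0" by (simp add: Cj_def Cp_def)
  moreover have "(Suc j * Suc p) * (Cj * Cp') = (Cj * Cp) * (Suc j * (n + Suc p))"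
    by (metis rec_p mult.commute mult.left_commute)
  moreover have "(Suc j * Suc p) * (Cj' * Cp) = (Cj * Cp) * (Suc p * (n + Suc j))"
    by (metis rec_j mult.commute mult.left_commute)
  ultimately have "(Suc j * Suc p) * (Cj * Cp') < (Suc j * Suc p) * (Cj' * Cp)" by simp
  then have "Cj * Cp' < Cj' * Cp" by (rule mult_less_cancel1[THEN iffD1, THEN conjunct2])
  then show ?thesis by (simp add: Cj_def Cj'_def Cp_def Cp'_def d_j p_def)
qed

lemma choose_product_strict_mono:
  fixes n h k d :: nat
  assumes "n \<ge> 1" "h < k" "2 * k \<le> d"
  shows "((n + h) choose h) * ((n + (d - h)) choose (d - h))
       < ((n + k) choose k) * ((n + (d - k)) choose (d - k))"
  using assms(2,3)
proof (induction k)
  case (Suc k)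
  then show ?case
    using choose_product_less_Suc[OF assms(1), of k d] by (cases "h = k") auto
qed simp

lemma dimS_product_le_imp_le:
  fixes n h k d :: nat
  assumes "n \<ge> 1" "h < k" "k \<le> d"
    and "dimS n k * dimS n (d - k) \<le> dimS n h * dimS n (d - h)"
  shows "d \<le> k + h"
proof (rule ccontr)
  assume "\<not> d \<le> k + h"
  define k' where "k' = min k (d - k)"
  have "h < k'" "2 * k' \<le> d" using \<open>\<not> d \<le> k + h\<close> assms by (auto simp: k'_def)
  then have "dimS n h * dimS n (d - h) < dimS n k' * dimS n (d - k')"
    unfolding dimS_eq_choose by (rule choose_product_strict_mono[OF assms(1)])
  also have "dimS n k' * dimS n (d - k') = dimS n k * dimS n (d - k)"
    using assms(3) by (cases "k \<le> d - k") (simp_all add: k'_def mult.commute)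
  finally show False using assms(4) by simp
qed

section \<open>The operators \<open>\<eta>\<close> and \<open>\<zeta>\<close>\<close>

type_synonym bitensor = "(nat \<Rightarrow> nat) \<times> (nat \<Rightarrow> nat) \<Rightarrow> complex"

definition bidegree_space :: "nat \<Rightarrow> nat \<Rightarrow> nat \<Rightarrow> bitensor set" where
  "bidegree_space n a b =
     {c. \<forall>A B. c (A, B) \<noteq> 0 \<longrightarrow> A \<in> multi_idx n a \<and> B \<in> multi_idx n b}"

lemma tensor_space_eq_bidegree_space: "tensor_space n k d = bidegree_space n k (d - k)"
  by (simp add: tensor_space_def bidegree_space_def)

text \<open>In coordinates, \<open>polar\<close> is \<open>\<eta> = \<Sum>\<^sub>j \<partial>\<^sub>j \<otimes> x\<^sub>j\<close> and \<open>polar_adj\<close> is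
  \<open>\<zeta> = \<Sum>\<^sub>j x\<^sub>j \<otimes> \<partial>\<^sub>j\<close>; e.g. \<open>\<partial>\<^sub>j x\<^bsup>A + e\<^sub>j\<^esup> = (A\<^sub>j + 1) x\<^bsup>A\<^esup>\<close> gives the coefficient of \<open>polar\<close>.\<close>

definition polar :: "nat \<Rightarrow> bitensor \<Rightarrow> bitensor" where
  "polar n c = (\<lambda>(A, B). \<Sum>j\<le>n. if 0 < B j
     then of_nat (Suc (A j)) * c (A(j := Suc (A j)), B(j := B j - 1)) else 0)"

definition polar_adj :: "nat \<Rightarrow> bitensor \<Rightarrow> bitensor" where
  "polar_adj n c = (\<lambda>(A, B). \<Sum>j\<le>n. if 0 < A j
     then of_nat (Suc (B j)) * c (A(j := A j - 1), B(j := Suc (B j))) else 0)"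

lemma polar_lincomb: "polar n (\<lambda>p. x p + s * y p) = (\<lambda>p. polar n x p + s * polar n y p)"
proof (rule ext, clarify)
  fix A B
  show "polar n (\<lambda>p. x p + s * y p) (A, B) = polar n x (A, B) + s * polar n y (A, B)"
    unfolding polar_def prod.case sum_distrib_left sum.distrib[symmetric]
    by (rule sum.cong) (auto simp: algebra_simps)
qed

lemma polar_zero [simp]: "polar n (\<lambda>p. 0) = (\<lambda>p. 0)"
  unfolding polar_def by (auto simp: fun_eq_iff intro!: sum.neutral)

lemma polar_adj_zero [simp]: "polar_adj n (\<lambda>p. 0) = (\<lambda>p. 0)"
  unfolding polar_adj_def by (auto simp: fun_eq_iff intro!: sum.neutral)

lemma polar_pow_lincomb:
  "(polar n ^^ m) (\<lambda>p. x p + s * y p) = (\<lambda>p. (polar n ^^ m) x p + s * (polar n ^^ m) y p)"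
  by (induction m) (simp_all add: polar_lincomb)

lemma multi_idx_fun_updD:
  assumes "j \<le> n" "A(j := x) \<in> multi_idx n a"
  shows "(\<forall>i>n. A i = 0) \<and> (\<Sum>i\<le>n. A i) + x = a + A j"
proof -
  have "\<forall>i>n. A i = 0"
  proof (intro allI impI)
    fix i assume "n < i"
    then have "i \<noteq> j" "(A(j := x)) i = 0" using assms by (auto simp: multi_idx_def)
    then show "A i = 0" by simp
  qed
  moreover have "(\<Sum>i\<le>n. (A(j := x)) i) + A j = (\<Sum>i\<le>n. A i) + x"
    using sum_fun_upd_comp[of "{..n}" j id A x] assms(1) by simp
  ultimately show ?thesis using assms(2) by (simp add: multi_idx_def)
qed

lemma polar_nonzero_imp:
  assumes "c \<in> bidegree_space n a b" "polar n c (A, B) \<noteq> 0"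
  shows "0 < a \<and> A \<in> multi_idx n (a - 1) \<and> B \<in> multi_idx n (Suc b)"
proof -
  obtain j where j: "j \<le> n" "0 < B j" "c (A(j := Suc (A j)), B(j := B j - 1)) \<noteq> 0"
    using assms(2) unfolding polar_def prod.case
    by (auto elim!: sum.not_neutral_contains_not_neutral split: if_splits)
  then have "A(j := Suc (A j)) \<in> multi_idx n a" "B(j := B j - 1) \<in> multi_idx n b"
    using assms(1) by (auto simp: bidegree_space_def)
  from multi_idx_fun_updD[OF j(1) this(1)] multi_idx_fun_updD[OF j(1) this(2)] j(2)
  show ?thesis by (auto simp: multi_idx_def)
qed

lemma polar_adj_nonzero_imp:
  assumes "c \<in> bidegree_space n a b" "polar_adj n c (A, B) \<noteq> 0"
  shows "0 < b \<and> A \<in> multi_idx n (Suc a) \<and> B \<in> multi_idx n (b - 1)"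
proof -
  obtain j where j: "j \<le> n" "0 < A j" "c (A(j := A j - 1), B(j := Suc (B j))) \<noteq> 0"
    using assms(2) unfolding polar_adj_def prod.case
    by (auto elim!: sum.not_neutral_contains_not_neutral split: if_splits)
  then have "A(j := A j - 1) \<in> multi_idx n a" "B(j := Suc (B j)) \<in> multi_idx n b"
    using assms(1) by (auto simp: bidegree_space_def)
  from multi_idx_fun_updD[OF j(1) this(1)] multi_idx_fun_updD[OF j(1) this(2)] j(2)
  show ?thesis by (auto simp: multi_idx_def)
qed

lemma polar_in_bidegree_space:
  "c \<in> bidegree_space n a b \<Longrightarrow> polar n c \<in> bidegree_space n (a - 1) (Suc b)"
  using polar_nonzero_imp unfolding bidegree_space_def by blast

lemma polar_bidegree_0: "c \<in> bidegree_space n 0 b \<Longrightarrow> polar n c = (\<lambda>p. 0)"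
  using polar_nonzero_imp[of c n 0 b] by (auto simp: fun_eq_iff)

lemma polar_adj_in_bidegree_space:
  "c \<in> bidegree_space n a b \<Longrightarrow> polar_adj n c \<in> bidegree_space n (Suc a) (b - 1)"
  using polar_adj_nonzero_imp unfolding bidegree_space_def by blast

lemma polar_adj_bidegree_0: "c \<in> bidegree_space n a 0 \<Longrightarrow> polar_adj n c = (\<lambda>p. 0)"
  using polar_adj_nonzero_imp[of c n a 0] by (auto simp: fun_eq_iff)

lemma lincomb_in_bidegree_space:
  "x \<in> bidegree_space n a b \<Longrightarrow> y \<in> bidegree_space n a b
    \<Longrightarrow> (\<lambda>p. x p + s * y p) \<in> bidegree_space n a b"
  unfolding bidegree_space_def mem_Collect_eq by (metis add.right_neutral mult_zero_right)

lemma polar_polar_adj_in_bidegree_space: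
  assumes "c \<in> bidegree_space n a b"
  shows "polar n (polar_adj n c) \<in> bidegree_space n a b"
proof (cases "b = 0")
  case True
  then have "polar_adj n c = (\<lambda>p. 0)" using assms polar_adj_bidegree_0 by simp
  then show ?thesis by (simp add: bidegree_space_def)
next
  case False
  then show ?thesis
    using polar_in_bidegree_space[OF polar_adj_in_bidegree_space[OF assms]] by simp
qed

lemma polar_adj_polar_point:
  "polar_adj n (polar n c) (A, B) = polar n (polar_adj n c) (A, B)
     + (of_nat (\<Sum>i\<le>n. A i) - of_nat (\<Sum>i\<le>n. B i)) * c (A, B)"
proof -
  txt \<open>\<open>G i j\<close> and \<open>H j i\<close> are the coefficients of \<open>x\<^sub>i\<partial>\<^sub>j \<otimes> \<partial>\<^sub>ix\<^sub>j\<close> in \<open>\<zeta>\<eta>\<close> and of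
    \<open>\<partial>\<^sub>jx\<^sub>i \<otimes> x\<^sub>j\<partial>\<^sub>i\<close> in \<open>\<eta>\<zeta>\<close>; they agree unless \<open>i = j\<close>.\<close>
  define G where "G i j = (if 0 < A i then of_nat (Suc (B i)) *
     (if 0 < (B(i := Suc (B i))) j then of_nat (Suc ((A(i := A i - 1)) j)) *
        c ((A(i := A i - 1))(j := Suc ((A(i := A i - 1)) j)),
           (B(i := Suc (B i)))(j := (B(i := Suc (B i))) j - 1)) else 0) else 0)" for i j
  define H where "H j i = (if 0 < B j then of_nat (Suc (A j)) *
     (if 0 < (A(j := Suc (A j))) i then of_nat (Suc ((B(j := B j - 1)) i)) *
        c ((A(j := Suc (A j)))(i := (A(j := Suc (A j))) i - 1),
           (B(j := B j - 1))(i := Suc ((B(j := B j - 1)) i))) else 0) else 0)" for i j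
  have FE: "polar_adj n (polar n c) (A, B) = (\<Sum>i\<le>n. \<Sum>j\<le>n. G i j)"
    unfolding polar_adj_def polar_def G_def prod.case
    by (intro sum.cong refl) (simp add: sum_distrib_left)
  have "polar n (polar_adj n c) (A, B) = (\<Sum>j\<le>n. \<Sum>i\<le>n. H j i)"
    unfolding polar_adj_def polar_def H_def prod.case
    by (intro sum.cong refl) (simp add: sum_distrib_left)
  also have "\<dots> = (\<Sum>i\<le>n. \<Sum>j\<le>n. H j i)" by (rule sum.swap)
  finally have EF: "polar n (polar_adj n c) (A, B) = (\<Sum>i\<le>n. \<Sum>j\<le>n. H j i)" .
  have off_diagonal: "G i j = H j i" if "i \<noteq> j" for i j
    using that by (simp add: G_def H_def fun_upd_twist algebra_simps)
  have diagonal: "G i i - H i i = (of_nat (A i) - of_nat (B i)) * c (A, B)" for i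
  proof -
    have "G i i = of_nat (A i) * of_nat (Suc (B i)) * c (A, B)"
    proof (cases "A i = 0")
      case False
      then have "(A(i := A i - 1))(i := Suc (A i - 1)) = A" by (auto simp: fun_eq_iff)
      with False show ?thesis by (simp add: G_def algebra_simps)
    qed (simp add: G_def)
    moreover have "H i i = of_nat (B i) * of_nat (Suc (A i)) * c (A, B)"
    proof (cases "B i = 0")
      case False
      then have "(B(i := B i - 1))(i := Suc (B i - 1)) = B" by (auto simp: fun_eq_iff)
      with False show ?thesis by (simp add: H_def algebra_simps)
    qed (simp add: H_def)
    ultimately show ?thesis by (simp add: algebra_simps)
  qed
  have "polar_adj n (polar n c) (A, B) - polar n (polar_adj n c) (A, B)
      = (\<Sum>i\<le>n. \<Sum>j\<le>n. G i j - H j i)"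
    unfolding FE EF by (simp add: sum_subtractf)
  also have "\<dots> = (\<Sum>i\<le>n. \<Sum>j\<le>n. if j = i then G i i - H i i else 0)"
    using off_diagonal by (intro sum.cong refl) auto
  also have "\<dots> = (\<Sum>i\<le>n. G i i - H i i)" by simp
  also have "\<dots> = (of_nat (\<Sum>i\<le>n. A i) - of_nat (\<Sum>i\<le>n. B i)) * c (A, B)"
    by (simp add: diagonal sum_distrib_right[symmetric] sum_subtractf)
  finally show ?thesis by (simp add: algebra_simps)
qed

lemma polar_adj_polar:
  assumes "c \<in> bidegree_space n a b"
  shows "polar_adj n (polar n c) = (\<lambda>p. polar n (polar_adj n c) p + of_int (int a - int b) * c p)"
proof (rule ext, clarify)
  fix A B
  show "polar_adj n (polar n c) (A, B) = polar n (polar_adj n c) (A, B) + of_int (int a - int b) * c (A, B)"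
  proof (cases "c (A, B) = 0")
    case False
    then have "A \<in> multi_idx n a" "B \<in> multi_idx n b" using assms by (auto simp: bidegree_space_def)
    then show ?thesis using polar_adj_polar_point[of n c A B] by (simp add: multi_idx_def)
  qed (simp add: polar_adj_polar_point)
qed

lemma polar_pow_in_bidegree_space:
  "c \<in> bidegree_space n a b \<Longrightarrow> (polar n ^^ m) c \<in> bidegree_space n (a - m) (b + m)"
proof (induction m)
  case (Suc m)
  then show ?case using polar_in_bidegree_space[of "(polar n ^^ m) c" n "a - m" "b + m"] by simp
qed simp

lemma polar_pow_zero [simp]: "(polar n ^^ m) (\<lambda>p. 0) = (\<lambda>p. 0)"
  by (induction m) simp_all

lemma polar_pow_vanishes:
  assumes "c \<in> bidegree_space n a b" "a < m"
  shows "(polar n ^^ m) c = (\<lambda>p. 0)"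
proof -
  obtain k where "m = k + Suc a" using less_imp_Suc_add[OF assms(2)] by auto
  then have "(polar n ^^ m) c = (polar n ^^ k) (polar n ((polar n ^^ a) c))"
    by (simp only: funpow_add o_apply funpow.simps)
  then show ?thesis
    using polar_bidegree_0 polar_pow_in_bidegree_space[OF assms(1), of a] by simp
qed

lemma polar_adj_polar_pow:
  assumes "c \<in> bidegree_space n a b"
  shows "polar_adj n ((polar n ^^ Suc m) c) = (\<lambda>p. (polar n ^^ Suc m) (polar_adj n c) p
           + of_int ((int m + 1) * (int a - int b - int m)) * (polar n ^^ m) c p)"
proof (induction m)
  case 0
  then show ?case using polar_adj_polar[OF assms] by simp
next
  case (Suc m)
  define s :: complex where "s = of_int ((int m + 1) * (int a - int b - int m))"
  define t :: complex where "t = of_int (int a - int b - 2 * (int m + 1))"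
  have step: "polar_adj n (polar n ((polar n ^^ Suc m) c))
      = (\<lambda>p. polar n (polar_adj n ((polar n ^^ Suc m) c)) p + t * (polar n ^^ Suc m) c p)"
  proof (cases "a < Suc m")
    case True
    then have "(polar n ^^ Suc m) c = (\<lambda>p. 0)" by (rule polar_pow_vanishes[OF assms])
    then show ?thesis by simp
  next
    case False
    with polar_adj_polar[OF polar_pow_in_bidegree_space[OF assms, of "Suc m"]]
    show ?thesis by (simp add: t_def of_nat_diff algebra_simps)
  qed
  have sum_st: "s + t = of_int ((int (Suc m) + 1) * (int a - int b - int (Suc m)))"
    unfolding s_def t_def of_int_add[symmetric] by (simp add: algebra_simps)
  have "polar_adj n ((polar n ^^ Suc (Suc m)) c) = polar_adj n (polar n ((polar n ^^ Suc m) c))"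
    by simp
  also have "\<dots> = (\<lambda>p. polar n (polar_adj n ((polar n ^^ Suc m) c)) p + t * (polar n ^^ Suc m) c p)"
    by (rule step)
  also have "\<dots> = (\<lambda>p. polar n (\<lambda>q. (polar n ^^ Suc m) (polar_adj n c) q + s * (polar n ^^ m) c q) p
      + t * (polar n ^^ Suc m) c p)"
    by (simp only: Suc.IH s_def)
  also have "\<dots> = (\<lambda>p. (polar n ^^ Suc (Suc m)) (polar_adj n c) p + (s + t) * (polar n ^^ Suc m) c p)"
    by (simp add: polar_lincomb distrib_right add.assoc)
  finally show ?case by (simp only: sum_st)
qed

section \<open>The Bombieri inner product\<close>

definition monomial_pairs :: "nat \<Rightarrow> nat \<Rightarrow> ((nat \<Rightarrow> nat) \<times> (nat \<Rightarrow> nat)) set" where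
  "monomial_pairs n D = {(A, B). (\<forall>j>n. A j = 0) \<and> (\<forall>j>n. B j = 0) \<and> (\<Sum>j\<le>n. A j) + (\<Sum>j\<le>n. B j) = D}"

text \<open>The Bombieri inner product \<open>\<langle>x\<^bsup>A\<^esup> \<otimes> x\<^bsup>B\<^esup>, x\<^bsup>A\<^esup> \<otimes> x\<^bsup>B\<^esup>\<rangle> = A! B!\<close>, for which
  multiplication by \<open>x\<^sub>j\<close> is adjoint to \<open>\<partial>\<^sub>j\<close>.\<close>

definition fact_weight :: "nat \<Rightarrow> (nat \<Rightarrow> nat) \<times> (nat \<Rightarrow> nat) \<Rightarrow> real" where
  "fact_weight n p = (\<Prod>j\<le>n. fact (fst p j)) * (\<Prod>j\<le>n. fact (snd p j))"

definition fact_inner :: "nat \<Rightarrow> nat \<Rightarrow> bitensor \<Rightarrow> bitensor \<Rightarrow> complex" where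
  "fact_inner n D x y = (\<Sum>p\<in>monomial_pairs n D. of_real (fact_weight n p) * x p * cnj (y p))"

definition fact_norm2 :: "nat \<Rightarrow> nat \<Rightarrow> bitensor \<Rightarrow> real" where
  "fact_norm2 n D c = (\<Sum>p\<in>monomial_pairs n D. fact_weight n p * (cmod (c p))\<^sup>2)"

lemma finite_monomial_pairs: "finite (monomial_pairs n D)"
proof (rule finite_subset)
  show "monomial_pairs n D \<subseteq> (\<Union>a\<le>D. multi_idx n a) \<times> (\<Union>b\<le>D. multi_idx n b)"
    by (auto simp: monomial_pairs_def multi_idx_def)
qed (simp add: finite_multi_idx)

lemma bidegree_space_support:
  "c \<in> bidegree_space n a b \<Longrightarrow> c p \<noteq> 0 \<Longrightarrow> p \<in> monomial_pairs n (a + b)"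
  by (cases p) (auto simp: bidegree_space_def monomial_pairs_def multi_idx_def)

lemma fact_weight_pos: "fact_weight n p > 0"
  by (simp add: fact_weight_def prod_pos)

lemma fact_inner_self: "fact_inner n D c c = of_real (fact_norm2 n D c)"
  unfolding fact_inner_def fact_norm2_def of_real_sum
  by (rule sum.cong) (simp_all add: mult.assoc flip: complex_norm_square)

lemma fact_norm2_nonneg: "fact_norm2 n D c \<ge> 0"
  unfolding fact_norm2_def by (intro sum_nonneg mult_nonneg_nonneg) (simp_all add: less_imp_le[OF fact_weight_pos])

lemma fact_norm2_eq_0_imp:
  assumes "fact_norm2 n D c = 0" "p \<in> monomial_pairs n D"
  shows "c p = 0"
proof -
  have "\<forall>q\<in>monomial_pairs n D. fact_weight n q * (cmod (c q))\<^sup>2 = 0"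
    using assms(1) unfolding fact_norm2_def
    by (subst sum_nonneg_eq_0_iff[symmetric]) (auto simp: finite_monomial_pairs less_imp_le[OF fact_weight_pos])
  then have "fact_weight n p * (cmod (c p))\<^sup>2 = 0" using assms(2) by blast
  then show ?thesis using fact_weight_pos[of n p] by simp
qed

lemma fact_weight_shift:
  assumes "k \<le> n" "0 < B k"
  shows "fact_weight n (A(k := Suc (A k)), B(k := B k - 1)) * of_nat (B k)
       = fact_weight n (A, B) * of_nat (Suc (A k))"
proof -
  define PA PB where "PA = (\<Prod>i\<le>n. (fact (A i) :: real))" and "PB = (\<Prod>i\<le>n. (fact (B i) :: real))"
  define PA' PB' where "PA' = (\<Prod>i\<le>n. (fact ((A(k := Suc (A k))) i) :: real))"
    and "PB' = (\<Prod>i\<le>n. (fact ((B(k := B k - 1)) i) :: real))"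
  have "PA' * fact (A k) = PA * fact (Suc (A k))" "PB' * fact (B k) = PB * fact (B k - 1)"
    unfolding PA_def PA'_def PB_def PB'_def using assms(1)
    by (simp_all only: prod_fun_upd_comp[of "{..n}" k fact] finite_atMost atMost_iff)
  moreover have "(fact (B k) :: real) = of_nat (B k) * fact (B k - 1)"
    using assms(2) by (cases "B k") simp_all
  ultimately have "PA' * fact (A k) = (PA * of_nat (Suc (A k))) * fact (A k)"
    and "(PB' * of_nat (B k)) * fact (B k - 1) = PB * fact (B k - 1)"
    by (simp_all add: algebra_simps)
  then have "PA' = PA * of_nat (Suc (A k))" "PB' * of_nat (B k) = PB"
    by (simp_all only: mult_cancel_right fact_nonzero simp_thms)
  then show ?thesis
    unfolding fact_weight_def fst_conv snd_conv
      PA_def[symmetric] PB_def[symmetric] PA'_def[symmetric] PB'_def[symmetric]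
    by (simp add: algebra_simps)
qed

lemma fun_upd_in_monomial_pairs:
  assumes "(A, B) \<in> monomial_pairs n D" "k \<le> n" "A k + B k = x + y"
  shows "(A(k := x), B(k := y)) \<in> monomial_pairs n D"
proof -
  have "(\<Sum>i\<le>n. (A(k := x)) i) + A k = (\<Sum>i\<le>n. A i) + x"
    and "(\<Sum>i\<le>n. (B(k := y)) i) + B k = (\<Sum>i\<le>n. B i) + y"
    using assms(2) sum_fun_upd_comp[of "{..n}" k id A x] sum_fun_upd_comp[of "{..n}" k id B y]
    by simp_all
  with assms show ?thesis by (simp add: monomial_pairs_def)
qed

lemma bij_betw_move_variable:
  "bij_betw (\<lambda>((A, B), k). ((A(k := Suc (A k)), B(k := B k - 1)), k))
     {q \<in> monomial_pairs n D \<times> {..n}. 0 < snd (fst q) (snd q)}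
     {q \<in> monomial_pairs n D \<times> {..n}. 0 < fst (fst q) (snd q)}"
  by (rule bij_betw_byWitness[where f' = "\<lambda>((A, B), k). ((A(k := A k - 1), B(k := Suc (B k))), k)"])
    (auto simp: fun_eq_iff intro!: fun_upd_in_monomial_pairs)

lemma polar_adjoint: "fact_inner n D (polar n x) y = fact_inner n D x (polar_adj n y)"
proof -
  define L where "L p k = (case p of (A, B) \<Rightarrow> of_real (fact_weight n (A, B))
      * (of_nat (Suc (A k)) * x (A(k := Suc (A k)), B(k := B k - 1))) * cnj (y (A, B)))" for p k
  define R where "R p k = (case p of (A, B) \<Rightarrow> of_real (fact_weight n (A, B))
      * x (A, B) * cnj (of_nat (Suc (B k)) * y (A(k := A k - 1), B(k := Suc (B k)))))" for p k
  define move :: "((nat \<Rightarrow> nat) \<times> (nat \<Rightarrow> nat)) \<times> nat \<Rightarrow> ((nat \<Rightarrow> nat) \<times> (nat \<Rightarrow> nat)) \<times> nat"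
    where "move = (\<lambda>((A, B), k). ((A(k := Suc (A k)), B(k := B k - 1)), k))"
  have "fact_inner n D (polar n x) y
      = (\<Sum>p\<in>monomial_pairs n D. \<Sum>k\<le>n. if 0 < snd p k then L p k else 0)"
    unfolding fact_inner_def polar_def L_def
    by (intro sum.cong refl) (auto simp: sum_distrib_left sum_distrib_right intro!: sum.cong)
  also have "\<dots> = (\<Sum>q\<in>{q \<in> monomial_pairs n D \<times> {..n}. 0 < snd (fst q) (snd q)}. L (fst q) (snd q))"
    by (rule sum_nested_if_eq_sum_filter) (simp_all add: finite_monomial_pairs)
  also have "\<dots> = (\<Sum>q\<in>{q \<in> monomial_pairs n D \<times> {..n}. 0 < snd (fst q) (snd q)}.
      R (fst (move q)) (snd (move q)))"
  proof (intro sum.cong refl)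
    fix q assume "q \<in> {q \<in> monomial_pairs n D \<times> {..n}. 0 < snd (fst q) (snd q)}"
    then obtain A B k where q: "q = ((A, B), k)" and k: "k \<le> n" "0 < B k" by auto
    then have "(B(k := B k - 1))(k := Suc (B k - 1)) = B" by (auto simp: fun_eq_iff)
    then have "R (fst (move ((A, B), k))) (snd (move ((A, B), k)))
        = of_real (fact_weight n (A(k := Suc (A k)), B(k := B k - 1)) * of_nat (B k))
          * x (A(k := Suc (A k)), B(k := B k - 1)) * cnj (y (A, B))"
      using k by (simp add: move_def R_def)
    also have "\<dots> = L (A, B) k" unfolding fact_weight_shift[of k n B A, OF k] by (simp add: L_def)
    finally show "L (fst q) (snd q) = R (fst (move q)) (snd (move q))" by (simp add: q)
  qed
  also have "\<dots> = (\<Sum>q\<in>{q \<in> monomial_pairs n D \<times> {..n}. 0 < fst (fst q) (snd q)}. R (fst q) (snd q))"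
    using sum.reindex_bij_betw[OF bij_betw_move_variable[folded move_def]] .
  also have "\<dots> = (\<Sum>p\<in>monomial_pairs n D. \<Sum>k\<le>n. if 0 < fst p k then R p k else 0)"
    by (rule sum_nested_if_eq_sum_filter[symmetric]) (simp_all add: finite_monomial_pairs)
  also have "\<dots> = fact_inner n D x (polar_adj n y)"
    unfolding fact_inner_def polar_adj_def R_def
    by (intro sum.cong refl) (auto simp: sum_distrib_left sum_distrib_right intro!: sum.cong)
  finally show ?thesis .
qed

lemma polar_polar_adj_eq_neg_imp_zero:
  assumes c: "c \<in> bidegree_space n a b"
    and EF: "polar n (polar_adj n c) = (\<lambda>p. - of_real r * c p)" and "r > 0"
  shows "c = (\<lambda>p. 0)"
proof -
  define D where "D = a + b"
  have "of_real (fact_norm2 n D (polar_adj n c)) = fact_inner n D (polar n (polar_adj n c)) c"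
    by (simp add: polar_adjoint fact_inner_self)
  also have "\<dots> = - of_real r * fact_inner n D c c"
    unfolding EF fact_inner_def by (simp add: sum_distrib_left algebra_simps)
  also have "\<dots> = of_real (- r * fact_norm2 n D c)" by (simp add: fact_inner_self)
  finally have "fact_norm2 n D (polar_adj n c) = - r * fact_norm2 n D c"
    by (simp only: of_real_eq_iff)
  then have "r * fact_norm2 n D c \<le> 0"
    using fact_norm2_nonneg[of n D "polar_adj n c"] by linarith
  then have "fact_norm2 n D c = 0"
    using fact_norm2_nonneg[of n D c] \<open>r > 0\<close> by (simp add: mult_le_0_iff)
  show ?thesis
  proof
    fix p show "c p = 0"
      using fact_norm2_eq_0_imp[OF \<open>fact_norm2 n D c = 0\<close>] bidegree_space_support[OF c, of p]
      unfolding D_def by blast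
  qed
qed

lemma polar_pow_inj_on_bidegree_space:
  "c \<in> bidegree_space n a b \<Longrightarrow> m + b \<le> a \<Longrightarrow> (polar n ^^ m) c = (\<lambda>p. 0) \<Longrightarrow> c = (\<lambda>p. 0)"
proof (induction m arbitrary: c)
  case (Suc m)
  define r :: real where "r = of_int ((int m + 1) * (int a - int b - int m))"
  have "r > 0" using Suc.prems(2) by (simp add: r_def)
  have "(\<lambda>p. 0) = polar_adj n ((polar n ^^ Suc m) c)" using Suc.prems(3) by simp
  also have "\<dots> = (\<lambda>p. (polar n ^^ m) (polar n (polar_adj n c)) p + of_real r * (polar n ^^ m) c p)"
    unfolding polar_adj_polar_pow[OF Suc.prems(1)] r_def by (simp add: funpow_Suc_right del: funpow.simps)
  finally have "(polar n ^^ m) (\<lambda>p. polar n (polar_adj n c) p + of_real r * c p) = (\<lambda>p. 0)"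
    by (simp add: polar_pow_lincomb)
  moreover have "(\<lambda>p. polar n (polar_adj n c) p + of_real r * c p) \<in> bidegree_space n a b"
    using Suc.prems(1) by (intro lincomb_in_bidegree_space polar_polar_adj_in_bidegree_space)
  ultimately have "(\<lambda>p. polar n (polar_adj n c) p + of_real r * c p) = (\<lambda>p. 0)"
    using Suc.IH Suc.prems(2) by simp
  then have "polar n (polar_adj n c) = (\<lambda>p. - of_real r * c p)"
    by (auto simp: fun_eq_iff eq_neg_iff_add_eq_0 dest: fun_cong)
  from Suc.prems(1) this \<open>r > 0\<close> show ?case by (rule polar_polar_adj_eq_neg_imp_zero)
qed simp

lemma polar_dim0_eq_0_imp:
  assumes c: "c \<in> bidegree_space 0 a b" and "0 < a" and "polar 0 c = (\<lambda>p. 0)"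
  shows "c = (\<lambda>p. 0)"
proof (rule ext, clarify)
  fix A B :: "nat \<Rightarrow> nat"
  show "c (A, B) = 0"
  proof (rule ccontr)
    assume "c (A, B) \<noteq> 0"
    then have "A 0 = a" using c by (auto simp: bidegree_space_def multi_idx_def)
    then have "(A(0 := A 0 - 1))(0 := Suc (A 0 - 1)) = A" using \<open>0 < a\<close> by (auto simp: fun_eq_iff)
    then have "polar 0 c (A(0 := A 0 - 1), B(0 := Suc (B 0))) = of_nat (Suc (A 0 - 1)) * c (A, B)"
      by (simp add: polar_def)
    with \<open>c (A, B) \<noteq> 0\<close> \<open>polar 0 c = (\<lambda>p. 0)\<close> show False
      by (metis mult_eq_0_iff of_nat_eq_0_iff nat.distinct(1))
  qed
qed

lemma polar_pow_dim0_inj_on_bidegree_space: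
  "c \<in> bidegree_space 0 a b \<Longrightarrow> m \<le> a \<Longrightarrow> (polar 0 ^^ m) c = (\<lambda>p. 0) \<Longrightarrow> c = (\<lambda>p. 0)"
proof (induction m arbitrary: a b c)
  case (Suc m)
  have "(polar 0 ^^ m) (polar 0 c) = (\<lambda>p. 0)"
    using Suc.prems(3) by (simp add: funpow_Suc_right del: funpow.simps)
  then have "polar 0 c = (\<lambda>p. 0)"
    using Suc.IH[OF polar_in_bidegree_space[OF Suc.prems(1)]] Suc.prems(2) by simp
  then show ?case using polar_dim0_eq_0_imp[OF Suc.prems(1)] Suc.prems(2) by simp
qed simp

section \<open>\<open>\<eta>\<^sup>m\<close> as a power of \<open>\<eta>\<close>\<close>

text \<open>\<open>deriv_coeff n A I\<close> is the scalar with \<open>\<partial>\<^bsup>I\<^esup> x\<^bsup>A + I\<^esup> = deriv_coeff n A I \<cdot> x\<^bsup>A\<^esup>\<close>.\<close>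

definition deriv_coeff :: "nat \<Rightarrow> (nat \<Rightarrow> nat) \<Rightarrow> (nat \<Rightarrow> nat) \<Rightarrow> complex" where
  "deriv_coeff n A I = (\<Prod>j\<le>n. of_nat (fact (A j + I j)) / of_nat (fact (A j)))"

lemma eta_apply: "eta n m c (A, B) = (\<Sum>I\<in>multi_idx n m. if (\<forall>j. I j \<le> B j)
   then multinom n m I * deriv_coeff n A I * c (\<lambda>j. A j + I j, \<lambda>j. B j - I j) else 0)"
  unfolding eta_def deriv_coeff_def by simp

lemma multi_idx_0: "multi_idx n 0 = {\<lambda>_. 0}"
  by (auto simp: multi_idx_def fun_eq_iff) (metis atMost_iff not_le)

lemma eta_0: "eta n 0 c = c"
proof (rule ext, clarify)
  fix A B
  have "multinom n 0 (\<lambda>_. 0) = 1" "deriv_coeff n A (\<lambda>_. 0) = 1"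
    by (simp_all add: multinom_def deriv_coeff_def)
  then show "eta n 0 c (A, B) = c (A, B)"
    unfolding eta_apply multi_idx_0 by simp
qed

lemma multinom_Suc:
  assumes J: "J \<in> multi_idx n (Suc m)"
  shows "multinom n (Suc m) J = (\<Sum>k\<le>n. if 0 < J k then multinom n m (J(k := J k - 1)) else 0)"
proof -
  define Q where "Q = (\<Prod>i\<le>n. (of_nat (fact (J i)) :: complex))"
  have "Q \<noteq> 0" by (simp add: Q_def)
  have summand: "(if 0 < J k then multinom n m (J(k := J k - 1)) else 0) = of_nat (fact m) * of_nat (J k) / Q"
    if k: "k \<le> n" for k
  proof (cases "J k = 0")
    case False
    have "(\<Prod>i\<le>n. (of_nat (fact ((J(k := J k - 1)) i)) :: complex)) * of_nat (fact (J k))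
        = Q * of_nat (fact (J k - 1))"
      unfolding Q_def using k prod_fun_upd_comp[of "{..n}" k "fact :: nat \<Rightarrow> complex" J] by simp
    moreover have "(of_nat (fact (J k)) :: complex) = of_nat (J k) * of_nat (fact (J k - 1))"
      using False by (cases "J k") (simp_all add: algebra_simps)
    ultimately have "(\<Prod>i\<le>n. (of_nat (fact ((J(k := J k - 1)) i)) :: complex)) * of_nat (J k) = Q"
      by (simp add: algebra_simps)
    with False \<open>Q \<noteq> 0\<close> show ?thesis by (auto simp: multinom_def field_simps)
  qed simp
  have "(\<Sum>k\<le>n. if 0 < J k then multinom n m (J(k := J k - 1)) else 0)
      = of_nat (fact m) * of_nat (\<Sum>k\<le>n. J k) / Q"
    by (simp add: summand sum_divide_distrib sum_distrib_left)
  also have "\<dots> = multinom n (Suc m) J"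
    using J by (simp add: multi_idx_def multinom_def Q_def algebra_simps)
  finally show ?thesis by simp
qed

lemma deriv_coeff_shift:
  assumes "k \<le> n"
  shows "of_nat (Suc (A k)) * deriv_coeff n (A(k := Suc (A k))) I = deriv_coeff n A (I(k := Suc (I k)))"
proof -
  define X where "X = (\<Prod>i\<le>n. (of_nat (fact (A i + (I(k := Suc (I k))) i)) :: complex))"
  define QA where "QA = (\<Prod>i\<le>n. (of_nat (fact (A i)) :: complex))"
  have "(\<Prod>i\<le>n. (of_nat (fact ((A(k := Suc (A k))) i + I i)) :: complex)) = X"
    unfolding X_def by (rule prod.cong) auto
  moreover have "(\<Prod>i\<le>n. (of_nat (fact ((A(k := Suc (A k))) i)) :: complex)) * of_nat (fact (A k))
      = (QA * of_nat (Suc (A k))) * of_nat (fact (A k))"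
    unfolding QA_def using assms prod_fun_upd_comp[of "{..n}" k "fact :: nat \<Rightarrow> complex" A] by simp
  ultimately have shifted: "deriv_coeff n (A(k := Suc (A k))) I = X / (QA * of_nat (Suc (A k)))"
    unfolding deriv_coeff_def prod_dividef by simp
  have unshifted: "deriv_coeff n A (I(k := Suc (I k))) = X / QA"
    unfolding deriv_coeff_def prod_dividef X_def QA_def ..
  have "QA \<noteq> 0" by (simp add: QA_def)
  then show ?thesis unfolding shifted unshifted by (simp add: field_simps del: of_nat_Suc)
qed

lemma eta_Suc_apply:
  "eta n (Suc m) c (A, B) = (\<Sum>J\<in>multi_idx n (Suc m). \<Sum>k\<le>n.
     if (\<forall>j. J j \<le> B j) \<and> 0 < J k
     then multinom n m (J(k := J k - 1)) * deriv_coeff n A J * c (\<lambda>j. A j + J j, \<lambda>j. B j - J j)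
     else 0)"
  unfolding eta_apply
proof (intro sum.cong refl)
  fix J assume J: "J \<in> multi_idx n (Suc m)"
  show "(if \<forall>j. J j \<le> B j
      then multinom n (Suc m) J * deriv_coeff n A J * c (\<lambda>j. A j + J j, \<lambda>j. B j - J j) else 0)
    = (\<Sum>k\<le>n. if (\<forall>j. J j \<le> B j) \<and> 0 < J k
      then multinom n m (J(k := J k - 1)) * deriv_coeff n A J * c (\<lambda>j. A j + J j, \<lambda>j. B j - J j)
      else 0)"
  proof (cases "\<forall>j. J j \<le> B j")
    case True
    then show ?thesis unfolding multinom_Suc[OF J] by (auto simp: sum_distrib_right intro!: sum.cong)
  next
    case False
    then show ?thesis by (simp only: if_False simp_thms sum.neutral_const)
  qed
qed

lemma multi_idx_fun_updI:
  assumes "I \<in> multi_idx n m" "k \<le> n" "I k + m' = x + m"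
  shows "I(k := x) \<in> multi_idx n m'"
proof -
  have "(\<Sum>i\<le>n. (I(k := x)) i) + I k = (\<Sum>i\<le>n. I i) + x"
    using assms(2) sum_fun_upd_comp[of "{..n}" k id I x] by simp
  with assms show ?thesis by (auto simp: multi_idx_def)
qed

lemma bij_betw_add_unit_multi_idx:
  "bij_betw (\<lambda>(k, I). (I(k := Suc (I k)), k))
     {q \<in> {..n} \<times> multi_idx n m. 0 < B (fst q) \<and> (\<forall>j. snd q j \<le> (B(fst q := B (fst q) - 1)) j)}
     {q \<in> multi_idx n (Suc m) \<times> {..n}. (\<forall>j. fst q j \<le> B j) \<and> 0 < fst q (snd q)}"
proof (rule bij_betw_byWitness[where f' = "\<lambda>(J, k). (k, J(k := J k - 1))"])
  show "(\<lambda>(k, I). (I(k := Suc (I k)), k))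
      ` {q \<in> {..n} \<times> multi_idx n m. 0 < B (fst q) \<and> (\<forall>j. snd q j \<le> (B(fst q := B (fst q) - 1)) j)}
    \<subseteq> {q \<in> multi_idx n (Suc m) \<times> {..n}. (\<forall>j. fst q j \<le> B j) \<and> 0 < fst q (snd q)}"
    by (auto simp: le_diff_conv2 intro!: multi_idx_fun_updI split: if_splits)
  show "(\<lambda>(J, k). (k, J(k := J k - 1)))
      ` {q \<in> multi_idx n (Suc m) \<times> {..n}. (\<forall>j. fst q j \<le> B j) \<and> 0 < fst q (snd q)}
    \<subseteq> {q \<in> {..n} \<times> multi_idx n m. 0 < B (fst q) \<and> (\<forall>j. snd q j \<le> (B(fst q := B (fst q) - 1)) j)}"
    by (auto simp: diff_le_mono intro!: multi_idx_fun_updI dest: less_le_trans)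
qed (auto simp: fun_eq_iff)

lemma eta_Suc: "eta n (Suc m) c = polar n (eta n m c)"
proof (rule ext, clarify)
  fix A B :: "nat \<Rightarrow> nat"
  define A' B' where "A' k = A(k := Suc (A k))" and "B' k = B(k := B k - 1)" for k
  define g where "g k I = of_nat (Suc (A k))
      * (multinom n m I * deriv_coeff n (A' k) I * c (\<lambda>j. A' k j + I j, \<lambda>j. B' k j - I j))" for k I
  define h where "h J k = multinom n m (J(k := J k - 1))
      * deriv_coeff n A J * c (\<lambda>j. A j + J j, \<lambda>j. B j - J j)" for J k
  define add_unit :: "nat \<times> (nat \<Rightarrow> nat) \<Rightarrow> (nat \<Rightarrow> nat) \<times> nat"
    where "add_unit = (\<lambda>(k, I). (I(k := Suc (I k)), k))"
  have "polar n (eta n m c) (A, B)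
      = (\<Sum>k\<le>n. \<Sum>I\<in>multi_idx n m. if 0 < B k \<and> (\<forall>j. I j \<le> B' k j) then g k I else 0)"
    unfolding polar_def prod.case eta_apply
    by (rule sum.cong[OF refl]) (auto simp: sum_distrib_left g_def A'_def B'_def intro!: sum.cong)
  also have "\<dots> = (\<Sum>q\<in>{q \<in> {..n} \<times> multi_idx n m. 0 < B (fst q) \<and> (\<forall>j. snd q j \<le> B' (fst q) j)}.
      g (fst q) (snd q))"
    by (rule sum_nested_if_eq_sum_filter) (simp_all add: finite_multi_idx)
  also have "\<dots> = (\<Sum>q\<in>{q \<in> {..n} \<times> multi_idx n m. 0 < B (fst q) \<and> (\<forall>j. snd q j \<le> B' (fst q) j)}.
      h (fst (add_unit q)) (snd (add_unit q)))"
  proof (intro sum.cong refl)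
    fix q assume "q \<in> {q \<in> {..n} \<times> multi_idx n m. 0 < B (fst q) \<and> (\<forall>j. snd q j \<le> B' (fst q) j)}"
    then obtain k I where q: "q = (k, I)" and "k \<le> n" by auto
    have "(\<lambda>j. A j + (I(k := Suc (I k))) j) = (\<lambda>j. A' k j + I j)"
      and "(\<lambda>j. B j - (I(k := Suc (I k))) j) = (\<lambda>j. B' k j - I j)"
      by (auto simp: fun_eq_iff A'_def B'_def)
    then show "g (fst q) (snd q) = h (fst (add_unit q)) (snd (add_unit q))"
      using deriv_coeff_shift[OF \<open>k \<le> n\<close>, of A I] by (simp add: q add_unit_def h_def g_def A'_def ac_simps)
  qed
  also have "\<dots> = (\<Sum>q\<in>{q \<in> multi_idx n (Suc m) \<times> {..n}. (\<forall>j. fst q j \<le> B j) \<and> 0 < fst q (snd q)}.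
      h (fst q) (snd q))"
    using sum.reindex_bij_betw[OF bij_betw_add_unit_multi_idx[of n m B, folded add_unit_def]]
    unfolding B'_def .
  also have "\<dots> = eta n (Suc m) c (A, B)"
    unfolding eta_Suc_apply h_def
    by (rule sum_nested_if_eq_sum_filter[symmetric]) (simp_all add: finite_multi_idx)
  finally show "eta n (Suc m) c (A, B) = polar n (eta n m c) (A, B)" by simp
qed

lemma eta_eq_polar_pow: "eta n m = polar n ^^ m"
proof
  fix c show "eta n m c = (polar n ^^ m) c"
    by (induction m) (simp_all add: eta_0 eta_Suc)
qed

theorem proposition5p1:
  fixes n h k d :: nat
  assumes "h < k" and "k \<le> d"
    and "dimS n k * dimS n (d - k) \<le> dimS n h * dimS n (d - h)"
  shows "inj_on (eta n (k - h)) (tensor_space n k d)"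
proof (rule inj_onI)
  fix c1 c2 assume c1: "c1 \<in> tensor_space n k d" and c2: "c2 \<in> tensor_space n k d"
    and eq: "eta n (k - h) c1 = eta n (k - h) c2"
  define c where "c = (\<lambda>p. c1 p + (-1) * c2 p)"
  have c: "c \<in> bidegree_space n k (d - k)"
    using c1 c2 unfolding c_def tensor_space_eq_bidegree_space by (rule lincomb_in_bidegree_space)
  have c_kernel: "(polar n ^^ (k - h)) c = (\<lambda>p. 0)"
    using eq unfolding c_def polar_pow_lincomb eta_eq_polar_pow by simp
  have "c = (\<lambda>p. 0)"
  proof (cases "n = 0")
    case True
    then show ?thesis using polar_pow_dim0_inj_on_bidegree_space[of c k "d - k" "k - h"] c c_kernel
      by simp
  next
    case False
    then have "d \<le> k + h" using dimS_product_le_imp_le[of n h k d] assms by simp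
    then show ?thesis using polar_pow_inj_on_bidegree_space[OF c _ c_kernel] assms by simp
  qed
  then show "c1 = c2" unfolding c_def by (auto simp: fun_eq_iff dest: fun_cong)
qed

end
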